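(* Let $\tau>1$, let $\kappa\ge3$ be an integer and let $x^\dagger\in\mathcal X$ satisfy $\bar k^\delta_{\mathrm{pr}}(x^\dagger)\ge\kappa$. Then on the event $\Omega_\kappa$ one has $k^\delta_{\mathrm{pr}}(x^\dagger)<\infty$ and $$k^\delta_{\mathrm{dp}}\le A_\tau\,k^\delta_{\mathrm{pr}}(x^\dagger),\qquad A_\tau:=\Big(\frac{\tau+1}{\tau-1}\Big)^2;$$ in particular $k^\delta_{\mathrm{dp}}<\infty$ on $\Omega_\kappa$.
   Context: Setting: $K:\mathcal X\to\mathcal Y$ compact injective with dense range between infinite-dimensional real separable Hilbert spaces, singular system $(\sigma_j,v_j,u_j)$ ($(v_j),(u_j)$ orthonormal bases, $\sigma_1\ge\sigma_2\ge\dots>0$, $Kv_j=\sigma_ju_j$, $K^*u_j=\sigma_jv_j$); $y^\dagger=Kx^\dagger$, $\delta>0$, data $(y^\delta,u_j):=(y^\dagger,u_j)+\delta(Z,u_j)$ with real random variables $(Z,u_j)$. For $m\in\mathbb N$: $k^\delta_{\mathrm{dp}}(m):=\min\{k\in\{0,\dots,m\}:\sqrt{\sum_{j=k+1}^m(y^\delta,u_j)^2}\le\tau\sqrt m\,\delta\}$, $k^\delta_{\mathrm{dp}}:=\sup_{m\in\mathbb N}k^\delta_{\mathrm{dp}}(m)$. With $\min\emptyset=\infty$: $k^\delta_{\mathrm{pr}}(x^\dagger):=\min\{k\in\mathbb N_0:\sum_{j=1}^k(y^\delta-y^\dagger,u_j)^2\ge\sum_{j=k+1}^\infty(y^\dagger,u_j)^2\}$,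 $\bar k^\delta_{\mathrm{pr}}(x^\dagger):=\min\{k\in\mathbb N_0:\delta^2k\ge\sum_{j=k+1}^\infty(y^\dagger,u_j)^2\}$. With $\varepsilon_\tau:=\min\big(\frac{(\tau+1)^2}{4}-1,\frac13\big)$, $$\Omega_\kappa:=\Big\{\Big|\sum_{j=1}^m(y^\delta-y^\dagger,u_j)^2-m\delta^2\Big|\le\varepsilon_\tau m\delta^2\ \text{for all integers } m\ge\kappa/3\Big\}.$$ *)

theory Defs
  imports "HOL-Analysis.Analysis" "HOL-Library.Extended_Nat"
begin

text \<open>Coordinate (singular-system) representation. Indices j start at 1.
  sv j : singular values, xc j = (x-dagger, v_j), z j = (Z, u_j) evaluated at a fixed outcome.
  Then (y-dagger, u_j) = sv j * xc j and (y-delta, u_j) = sv j * xc j + delta * z j.\<close>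

definition ydag :: "(nat \<Rightarrow> real) \<Rightarrow> (nat \<Rightarrow> real) \<Rightarrow> nat \<Rightarrow> real" where
  "ydag sv xc j = sv j * xc j"

definition ydelta :: "(nat \<Rightarrow> real) \<Rightarrow> (nat \<Rightarrow> real) \<Rightarrow> real \<Rightarrow> (nat \<Rightarrow> real) \<Rightarrow> nat \<Rightarrow> real" where
  "ydelta sv xc delta z j = ydag sv xc j + delta * z j"

text \<open>Truncated discrepancy principle k_dp(m) (minimum over {0..m}; k = m always qualifies).\<close>
definition kdp_m :: "real \<Rightarrow> real \<Rightarrow> (nat \<Rightarrow> real) \<Rightarrow> nat \<Rightarrow> nat" where
  "kdp_m tau delta yd m =
     (LEAST k. k \<le> m \<and> sqrt (\<Sum>j\<in>{k+1..m}. (yd j)\<^sup>2) \<le> tau * sqrt (real m) * delta)"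

definition kdp :: "real \<Rightarrow> real \<Rightarrow> (nat \<Rightarrow> real) \<Rightarrow> enat" where
  "kdp tau delta yd = (SUP m\<in>{1..}. enat (kdp_m tau delta yd m))"

definition enat_min :: "(nat \<Rightarrow> bool) \<Rightarrow> enat" where
  "enat_min P = (if \<exists>k. P k then enat (LEAST k. P k) else \<infinity>)"

definition tail :: "(nat \<Rightarrow> real) \<Rightarrow> nat \<Rightarrow> real" where
  "tail yt k = (\<Sum>i. (yt (i + k + 1))\<^sup>2)"

definition kpr :: "(nat \<Rightarrow> real) \<Rightarrow> (nat \<Rightarrow> real) \<Rightarrow> enat" where
  "kpr yt yd = enat_min (\<lambda>k. (\<Sum>j\<in>{1..k}. (yd j - yt j)\<^sup>2) \<ge> tail yt k)"

definition kbar_pr :: "real \<Rightarrow> (nat \<Rightarrow> real) \<Rightarrow> enat" where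
  "kbar_pr delta yt = enat_min (\<lambda>k. delta\<^sup>2 * real k \<ge> tail yt k)"

definition eps_tau :: "real \<Rightarrow> real" where
  "eps_tau tau = min ((tau + 1)\<^sup>2 / 4 - 1) (1/3)"

text \<open>The event \<Omega>_\<kappa>, as a property of the realized data.\<close>
definition Omega :: "real \<Rightarrow> real \<Rightarrow> nat \<Rightarrow> (nat \<Rightarrow> real) \<Rightarrow> (nat \<Rightarrow> real) \<Rightarrow> bool" where
  "Omega tau delta \<kappa> yt yd \<longleftrightarrow>
     (\<forall>m::nat. real m \<ge> real \<kappa> / 3 \<longrightarrow>
        \<bar>(\<Sum>j\<in>{1..m}. (yd j - yt j)\<^sup>2) - real m * delta\<^sup>2\<bar> \<le> eps_tau tau * real m * delta\<^sup>2)"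

definition A_tau :: "real \<Rightarrow> real" where
  "A_tau tau = ((tau + 1) / (tau - 1))\<^sup>2"

end

theory Submission
  imports Defs
begin

text \<open>Write \<open>K = k_pr\<close>. On \<open>\<Omega>_\<kappa>\<close> the noise energy of the first \<open>m\<close> coefficients grows like
  \<open>m\<delta>\<^sup>2\<close>, while the tail of \<open>y\<^sup>\<dagger>\<close> is bounded, so \<open>K\<close> is finite; and \<open>kbar_pr \<ge> \<kappa>\<close> forces
  \<open>K \<ge> \<kappa>/3\<close>, so the two-sided noise bound of \<open>\<Omega>_\<kappa>\<close> applies at \<open>K\<close> and at every \<open>m \<ge> K\<close>.
  For \<open>m > A\<^sub>\<tau>K\<close> the triangle inequality bounds the residual after \<open>K\<close> terms by
  \<open>\<surd>(tail K) + \<surd>(noise m) \<le> \<surd>(1+\<epsilon>) \<delta> (\<surd>K + \<surd>m) \<le> (\<tau>+1)/2 \<delta> (\<surd>K + \<surd>m) \<le> \<tau> \<surd>m \<delta>\<close>,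
  hence \<open>k_dp(m) \<le> K\<close>; for \<open>m \<le> A\<^sub>\<tau>K\<close> trivially \<open>k_dp(m) \<le> m\<close>.\<close>

definition noise_sq :: "(nat \<Rightarrow> real) \<Rightarrow> (nat \<Rightarrow> real) \<Rightarrow> nat \<Rightarrow> real" where
  "noise_sq yt yd m = (\<Sum>j\<in>{1..m}. (yd j - yt j)\<^sup>2)"

lemma noise_sq_mono: "k \<le> m \<Longrightarrow> noise_sq yt yd k \<le> noise_sq yt yd m"
  unfolding noise_sq_def by (rule sum_mono2) auto

lemma summable_tail_shift:
  fixes yt :: "nat \<Rightarrow> real"
  shows "summable (\<lambda>j. (yt j)\<^sup>2) \<Longrightarrow> summable (\<lambda>i. (yt (i + k + 1))\<^sup>2)"
  using summable_iff_shift[of "\<lambda>j. (yt j)\<^sup>2" "k+1"] by (simp add: add.assoc)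

lemma tail_Suc:
  "summable (\<lambda>j. (yt j)\<^sup>2) \<Longrightarrow> tail yt k = (yt (k+1))\<^sup>2 + tail yt (Suc k)"
  unfolding tail_def using suminf_split_head[OF summable_tail_shift] by simp

lemma tail_nonneg:
  assumes "summable (\<lambda>j. (yt j)\<^sup>2)"
  shows "0 \<le> tail yt k"
  unfolding tail_def using summable_tail_shift[OF assms] by (rule suminf_nonneg) simp

lemma tail_antimono:
  assumes "summable (\<lambda>j. (yt j)\<^sup>2)" "k \<le> k'"
  shows "tail yt k' \<le> tail yt k"
  using assms(2)
proof (induction k' rule: dec_induct)
  case (step n)
  then show ?case using tail_Suc[OF assms(1), of n] zero_le_power2[of "yt (n+1)"] by linarith
qed simp

lemma sum_le_tail:
  assumes "summable (\<lambda>j. (yt j)\<^sup>2)" "k \<le> m"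
  shows "(\<Sum>j\<in>{k+1..m}. (yt j)\<^sup>2) \<le> tail yt k"
proof -
  have "(\<Sum>j\<in>{k+1..k+d}. (yt j)\<^sup>2) \<le> tail yt k" for d
  proof (induction d arbitrary: k)
    case 0
    then show ?case using tail_nonneg[OF assms(1)] by simp
  next
    case (Suc d)
    have "{k+1..k+Suc d} = insert (k+1) {Suc k+1..Suc k+d}" by auto
    then have "(\<Sum>j\<in>{k+1..k+Suc d}. (yt j)\<^sup>2)
        = (yt (k+1))\<^sup>2 + (\<Sum>j\<in>{Suc k+1..Suc k+d}. (yt j)\<^sup>2)" by simp
    also have "\<dots> \<le> (yt (k+1))\<^sup>2 + tail yt (Suc k)" using Suc[of "Suc k"] by simp
    finally show ?case using tail_Suc[OF assms(1), of k] by simp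
  qed
  from this[of "m - k"] show ?thesis using assms(2) by simp
qed

text \<open>Only the boundedness of \<open>\<sigma>\<close> is needed; \<open>sv 0\<close> is an unconstrained junk value.\<close>
lemma summable_ydag_sq:
  assumes sigma_pos: "\<And>j. j \<ge> 1 \<Longrightarrow> sv j > 0"
    and sigma_mono: "\<And>i j. 1 \<le> i \<Longrightarrow> i \<le> j \<Longrightarrow> sv j \<le> sv i"
    and xc_l2: "summable (\<lambda>j. (xc j)\<^sup>2)"
  shows "summable (\<lambda>j. (ydag sv xc j)\<^sup>2)"
proof (rule summable_comparison_test[OF _ summable_mult[OF xc_l2]])
  define M where "M = \<bar>sv 0\<bar> + \<bar>sv 1\<bar>"
  have "\<bar>sv j\<bar> \<le> M" for j
    using sigma_pos[of j] sigma_mono[of 1 j] by (cases "j = 0") (auto simp: M_def)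
  then have "(sv j)\<^sup>2 \<le> M\<^sup>2" for j
    by (metis abs_le_square_iff abs_of_nonneg abs_ge_zero order_trans)
  then have "(sv n)\<^sup>2 * (xc n)\<^sup>2 \<le> M\<^sup>2 * (xc n)\<^sup>2" for n
    by (rule mult_right_mono) simp
  then show "\<exists>N. \<forall>n\<ge>N. norm ((ydag sv xc n)\<^sup>2) \<le> M\<^sup>2 * (xc n)\<^sup>2"
    by (simp add: ydag_def power_mult_distrib)
qed

lemma eps_tau_bounds:
  assumes "tau > 1"
  shows "0 < eps_tau tau" "eps_tau tau \<le> 1/3" "1 + eps_tau tau \<le> (tau + 1)\<^sup>2 / 4"
proof -
  have "(2::real)\<^sup>2 < (tau + 1)\<^sup>2" using assms by (intro power_strict_mono) auto
  then show "0 < eps_tau tau" "eps_tau tau \<le> 1/3" "1 + eps_tau tau \<le> (tau + 1)\<^sup>2 / 4"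
    unfolding eps_tau_def by (auto simp: min_def)
qed

lemma Omega_noise_sq_bounds:
  assumes "Omega tau delta \<kappa> yt yd" "real \<kappa> / 3 \<le> real m"
  shows "(1 - eps_tau tau) * m * delta\<^sup>2 \<le> noise_sq yt yd m"
    and "noise_sq yt yd m \<le> (1 + eps_tau tau) * m * delta\<^sup>2"
  using assms unfolding Omega_def noise_sq_def by (auto simp: abs_le_iff algebra_simps)

lemma tail_gt_below_kbar_pr:
  assumes "enat \<kappa> \<le> kbar_pr delta yt" "k < \<kappa>"
  shows "delta\<^sup>2 * real k < tail yt k"
proof (rule ccontr)
  assume "\<not> ?thesis"
  then have "tail yt k \<le> delta\<^sup>2 * real k" by simp
  then have "kbar_pr delta yt \<le> enat k"
    unfolding kbar_pr_def enat_min_def by (auto intro: Least_le)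
  with assms(1) have "enat \<kappa> \<le> enat k" by (rule order.trans)
  then show False using assms(2) by simp
qed

lemma kpr_finite:
  assumes yt_l2: "summable (\<lambda>j. (yt j)\<^sup>2)" and event: "Omega tau delta \<kappa> yt yd"
    and "tau > 1" "delta > 0"
  obtains K where "kpr yt yd = enat K" "tail yt K \<le> noise_sq yt yd K"
proof -
  let ?P = "\<lambda>k. tail yt k \<le> noise_sq yt yd k"
  \<comment> \<open>Beyond \<open>3 tail(0) / (2\<delta>\<^sup>2)\<close> the noise energy \<open>\<ge> (2/3) k \<delta>\<^sup>2\<close> dominates every tail.\<close>
  define k0 where "k0 = nat \<lceil>3 * tail yt 0 / (2 * delta\<^sup>2)\<rceil> + \<kappa>"
  have "?P k0"
  proof -
    have "3 * tail yt 0 / (2 * delta\<^sup>2) \<le> real k0"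
      unfolding k0_def by linarith
    then have "tail yt 0 \<le> (2/3) * k0 * delta\<^sup>2" using \<open>delta > 0\<close> by (simp add: field_simps)
    also have "\<dots> \<le> (1 - eps_tau tau) * k0 * delta\<^sup>2"
      using eps_tau_bounds[OF \<open>tau > 1\<close>] by (intro mult_right_mono) auto
    also have "\<dots> \<le> noise_sq yt yd k0"
      by (rule Omega_noise_sq_bounds(1)[OF event]) (simp add: k0_def)
    finally show ?thesis using tail_antimono[OF yt_l2, of 0 k0] by simp
  qed
  then have "kpr yt yd = enat (LEAST k. ?P k)"
    unfolding kpr_def enat_min_def noise_sq_def by auto
  moreover have "?P (LEAST k. ?P k)" using \<open>?P k0\<close> by (rule LeastI)
  ultimately show ?thesis by (rule that)
qed

text \<open>If \<open>K < \<kappa>/3\<close>, then by \<open>\<Omega>_\<kappa>\<close> at \<open>m\<^sub>0 = \<lceil>\<kappa>/3\<rceil>\<close> one has \<open>noise(K) \<le> (4/3) m\<^sub>0 \<delta>\<^sup>2 \<le> (\<kappa>-1) \<delta>\<^sup>2\<close>,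
  which is below \<open>tail(\<kappa>-1) \<le> tail(K)\<close> because \<open>kbar_pr \<ge> \<kappa>\<close>; this needs \<open>\<kappa> \<ge> 3\<close>.\<close>
lemma kpr_ge_kappa_div_3:
  assumes yt_l2: "summable (\<lambda>j. (yt j)\<^sup>2)" and event: "Omega tau delta \<kappa> yt yd"
    and kbar: "enat \<kappa> \<le> kbar_pr delta yt" and "tau > 1" "\<kappa> \<ge> 3"
    and stop: "tail yt K \<le> noise_sq yt yd K"
  shows "real \<kappa> / 3 \<le> real K"
proof (rule ccontr)
  assume "\<not> ?thesis"
  then have K_small: "real K < real \<kappa> / 3" by simp
  define m0 where "m0 = (\<kappa> + 2) div 3"
  have "4 * m0 \<le> 3 * (\<kappa> - 1)" unfolding m0_def using \<open>\<kappa> \<ge> 3\<close> by presburger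
  then have m0: "real \<kappa> / 3 \<le> real m0" "(4/3) * real m0 \<le> real (\<kappa> - 1)"
    unfolding m0_def by linarith+
  have "noise_sq yt yd K \<le> noise_sq yt yd m0"
    using K_small m0(1) by (intro noise_sq_mono) linarith
  also have "\<dots> \<le> (1 + eps_tau tau) * m0 * delta\<^sup>2"
    by (rule Omega_noise_sq_bounds(2)[OF event m0(1)])
  also have "\<dots> \<le> (4/3) * m0 * delta\<^sup>2"
    using eps_tau_bounds[OF \<open>tau > 1\<close>] by (intro mult_right_mono) auto
  also have "\<dots> \<le> real (\<kappa> - 1) * delta\<^sup>2"
    using m0(2) by (intro mult_right_mono) auto
  also have "\<dots> < tail yt (\<kappa> - 1)"
    using tail_gt_below_kbar_pr[OF kbar, of "\<kappa> - 1"] \<open>\<kappa> \<ge> 3\<close> by (simp add: mult.commute)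
  also have "\<dots> \<le> tail yt K"
    using K_small by (intro tail_antimono[OF yt_l2]) linarith
  finally show False using stop by simp
qed

lemma kdp_m_le_self: "0 \<le> tau \<Longrightarrow> 0 \<le> delta \<Longrightarrow> kdp_m tau delta yd m \<le> m"
  unfolding kdp_m_def by (rule Least_le) simp

lemma kdp_m_le:
  "k \<le> m \<Longrightarrow> sqrt (\<Sum>j\<in>{k+1..m}. (yd j)\<^sup>2) \<le> tau * sqrt (real m) * delta
    \<Longrightarrow> kdp_m tau delta yd m \<le> k"
  unfolding kdp_m_def by (rule Least_le) simp

lemma residual_le_tail_plus_noise:
  assumes "summable (\<lambda>j. (yt j)\<^sup>2)" "K \<le> m"
  shows "sqrt (\<Sum>j\<in>{K+1..m}. (yd j)\<^sup>2) \<le> sqrt (tail yt K) + sqrt (noise_sq yt yd m)"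
proof -
  define e where "e j = yd j - yt j" for j
  have "sqrt (\<Sum>j\<in>{K+1..m}. (yd j)\<^sup>2) = L2_set (\<lambda>j. yt j + e j) {K+1..m}"
    unfolding L2_set_def e_def by simp
  also have "\<dots> \<le> L2_set yt {K+1..m} + L2_set e {K+1..m}"
    by (rule L2_set_triangle_ineq)
  also have "L2_set yt {K+1..m} \<le> sqrt (tail yt K)"
    unfolding L2_set_def by (intro real_sqrt_le_mono sum_le_tail assms)
  also have "L2_set e {K+1..m} \<le> sqrt (noise_sq yt yd m)"
    unfolding L2_set_def noise_sq_def e_def by (intro real_sqrt_le_mono sum_mono2) auto
  finally show ?thesis by simp
qed

lemma kdp_m_le_kpr:
  assumes yt_l2: "summable (\<lambda>j. (yt j)\<^sup>2)" and "tau > 1" "delta > 0"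
    and stop: "tail yt K \<le> noise_sq yt yd K"
    and noise_K: "noise_sq yt yd K \<le> (1 + eps_tau tau) * K * delta\<^sup>2"
    and noise_m: "noise_sq yt yd m \<le> (1 + eps_tau tau) * m * delta\<^sup>2"
    and m_large: "A_tau tau * real K < real m"
  shows "kdp_m tau delta yd m \<le> K"
proof -
  define c where "c = sqrt (1 + eps_tau tau)"
  have c: "0 \<le> c" "c \<le> (tau + 1) / 2"
  proof -
    have "c \<le> sqrt ((tau + 1)\<^sup>2 / 4)"
      unfolding c_def using eps_tau_bounds[OF \<open>tau > 1\<close>] by (intro real_sqrt_le_mono) auto
    then show "c \<le> (tau + 1) / 2" using \<open>tau > 1\<close> by (simp add: real_sqrt_divide)
    show "0 \<le> c" unfolding c_def using eps_tau_bounds[OF \<open>tau > 1\<close>] by simp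
  qed
  have "real K * (tau + 1)\<^sup>2 \<le> real m * (tau - 1)\<^sup>2"
    using m_large \<open>tau > 1\<close> unfolding A_tau_def by (simp add: power_divide field_simps)
  then have "sqrt (real K * (tau + 1)\<^sup>2) \<le> sqrt (real m * (tau - 1)\<^sup>2)"
    by (rule real_sqrt_le_mono)
  then have ratio: "sqrt K * (tau + 1) \<le> sqrt m * (tau - 1)"
    using \<open>tau > 1\<close> by (simp add: real_sqrt_mult)
  have "real K \<le> A_tau tau * real K"
    unfolding A_tau_def using \<open>tau > 1\<close> by (simp add: le_divide_eq_1 mult_le_cancel_right1)
  then have "K \<le> m" using m_large by simp
  have sqrt_bound: "sqrt ((1 + eps_tau tau) * n * delta\<^sup>2) = c * sqrt n * delta" for n
    unfolding c_def using \<open>delta > 0\<close> by (simp add: real_sqrt_mult)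
  have "sqrt (\<Sum>j\<in>{K+1..m}. (yd j)\<^sup>2) \<le> sqrt (tail yt K) + sqrt (noise_sq yt yd m)"
    by (rule residual_le_tail_plus_noise[OF yt_l2 \<open>K \<le> m\<close>])
  also have "\<dots> \<le> c * sqrt K * delta + c * sqrt m * delta"
  proof (intro add_mono)
    show "sqrt (tail yt K) \<le> c * sqrt K * delta"
      unfolding sqrt_bound[symmetric] using stop noise_K by simp
    show "sqrt (noise_sq yt yd m) \<le> c * sqrt m * delta"
      unfolding sqrt_bound[symmetric] using noise_m by simp
  qed
  also have "\<dots> = c * ((sqrt K + sqrt m) * delta)" by (simp add: algebra_simps)
  also have "\<dots> \<le> (tau + 1) / 2 * ((sqrt K + sqrt m) * delta)"
    using c \<open>delta > 0\<close> by (intro mult_right_mono) auto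
  also have "\<dots> \<le> tau * sqrt m * delta"
  proof -
    have "(tau + 1) / 2 * (sqrt K + sqrt m) \<le> tau * sqrt m"
      using ratio by (simp add: field_simps)
    then show ?thesis using \<open>delta > 0\<close> by (simp add: mult_right_mono mult.assoc[symmetric])
  qed
  finally show ?thesis by (rule kdp_m_le[OF \<open>K \<le> m\<close>])
qed

lemma kdp_le_A_tau_kpr:
  assumes yt_l2: "summable (\<lambda>j. (yt j)\<^sup>2)" and event: "Omega tau delta \<kappa> yt yd"
    and "tau > 1" "delta > 0"
    and stop: "tail yt K \<le> noise_sq yt yd K" and K_large: "real \<kappa> / 3 \<le> real K"
  obtains n where "kdp tau delta yd = enat n" "real n \<le> A_tau tau * real K"
proof -
  define B where "B = nat \<lfloor>A_tau tau * real K\<rfloor>"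
  have "kdp_m tau delta yd m \<le> B" for m
  proof (cases "real m \<le> A_tau tau * real K")
    case True
    then show ?thesis
      using kdp_m_le_self[of tau delta yd m] \<open>tau > 1\<close> \<open>delta > 0\<close>
      unfolding B_def by (simp add: le_nat_floor)
  next
    case False
    have A_ge_1: "1 \<le> A_tau tau"
      unfolding A_tau_def using \<open>tau > 1\<close> by (simp add: le_divide_eq_1)
    then have "real K \<le> real m"
      using False mult_right_mono[OF A_ge_1, of "real K"] by simp
    have "kdp_m tau delta yd m \<le> K"
      using False K_large \<open>real K \<le> real m\<close>
      by (intro kdp_m_le_kpr[OF yt_l2 \<open>tau > 1\<close> \<open>delta > 0\<close> stop]
          Omega_noise_sq_bounds(2)[OF event]) auto
    also have "K \<le> B"
      unfolding B_def using A_ge_1 by (simp add: le_nat_floor mult_le_cancel_right1)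
    finally show ?thesis .
  qed
  then have "kdp tau delta yd \<le> enat B"
    unfolding kdp_def by (intro SUP_least) simp
  moreover have "real B \<le> A_tau tau * real K"
    unfolding B_def using \<open>tau > 1\<close> by (simp add: A_tau_def of_nat_floor)
  ultimately show ?thesis
    using that by (cases "kdp tau delta yd") auto
qed

theorem mainTheorem11:
  fixes sv xc z :: "nat \<Rightarrow> real" and tau delta :: real and \<kappa> :: nat
  assumes sigma_pos: "\<And>j. j \<ge> 1 \<Longrightarrow> sv j > 0"
    and sigma_mono: "\<And>i j. 1 \<le> i \<Longrightarrow> i \<le> j \<Longrightarrow> sv j \<le> sv i"
    and sigma_compact: "sv \<longlonglongrightarrow> 0"
    and xc_l2: "summable (\<lambda>j. (xc j)\<^sup>2)"
    and tau: "tau > 1" and delta: "delta > 0" and kappa: "\<kappa> \<ge> 3"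
    and kbar: "kbar_pr delta (ydag sv xc) \<ge> enat \<kappa>"
    and event: "Omega tau delta \<kappa> (ydag sv xc) (ydelta sv xc delta z)"
  shows "kpr (ydag sv xc) (ydelta sv xc delta z) \<noteq> \<infinity>
       \<and> kdp tau delta (ydelta sv xc delta z) \<noteq> \<infinity>
       \<and> real (the_enat (kdp tau delta (ydelta sv xc delta z)))
           \<le> A_tau tau * real (the_enat (kpr (ydag sv xc) (ydelta sv xc delta z)))"
proof -
  have yt_l2: "summable (\<lambda>j. (ydag sv xc j)\<^sup>2)"
    by (rule summable_ydag_sq[OF sigma_pos sigma_mono xc_l2])
  obtain K where kpr: "kpr (ydag sv xc) (ydelta sv xc delta z) = enat K"
    and stop: "tail (ydag sv xc) K \<le> noise_sq (ydag sv xc) (ydelta sv xc delta z) K"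
    using kpr_finite[OF yt_l2 event tau delta] by blast
  have "real \<kappa> / 3 \<le> real K"
    by (rule kpr_ge_kappa_div_3[OF yt_l2 event kbar tau kappa stop])
  then obtain n where "kdp tau delta (ydelta sv xc delta z) = enat n"
    and "real n \<le> A_tau tau * real K"
    using kdp_le_A_tau_kpr[OF yt_l2 event tau delta stop] by blast
  with kpr show ?thesis by simp
qed

end
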